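(* For integers $r,s\ge0$ and $(a,b)\in\mathbb{Z}^2$, let $W_r(a,b)$ be the number of $r$-step nearest-neighbour walks in $\mathbb{Z}^2$ from $0$ to $(a,b)$, and let $W_{r,s}$ be the minimum of $W_r(a,b)$ over all $(a,b)$ with $|a|+|b|\le s$ and $a+b\equiv s \pmod 2$. Then for any even $\tau>0$ and $p\in[0,1]$, \[ R_\tau(p) \ge \sum_{k=0}^{\tau/2}\ \sum_{r+s=2k} \binom{r+s}{r}(1-p)^s\left(\frac{p}{4}\right)^r W_{r,s}. \] In particular, \[ R_4(p) = 1 + \frac{1}{4}p^2+\frac{1}{2}p(1-p) + \frac{9}{64}p^{4}+ \frac{9}{16}p^{3}(1-p)+\frac{3}{8} p^2(1-p)^2 . \]
   Context: A sequence of instructions is an infinite walk $(x_t)_{t\ge 0}$ in $\mathbb{Z}^2$ with $x_0=0$ and $x_{t+1}-x_t\in\{(\pm1,0),(0,\pm1)\}$. The guided random walk with error probability $p$ following it is the Markov chain $(X_t)_{t\ge0}$ with $X_0=0$ and independent increments, $X_{t+1}-X_t = x_{t+1}-x_t$ with probability $1-p$, and $X_{t+1}-X_t$ uniformly distributed on $\{(\pm1,0),(0,\pm1)\}$ with probability $p$. For a positive integer $\tau$, $R_\tau(p) := \min \mathbb{E}[\#\{t\in\{0,1,\dots,\tau\} : X_t = 0\}]$, the minimum being over all sequences of instructions. *)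

theory Defs
  imports "HOL-Probability.Probability"
begin

type_synonym pt = "int \<times> int"

definition padd :: "pt \<Rightarrow> pt \<Rightarrow> pt" where
  "padd u v = (fst u + fst v, snd u + snd v)"

definition psub :: "pt \<Rightarrow> pt \<Rightarrow> pt" where
  "psub u v = (fst u - fst v, snd u - snd v)"

definition dirs :: "pt set" where
  "dirs = {(1,0), (-1,0), (0,1), (0,-1)}"

definition instructions :: "(nat \<Rightarrow> pt) set" where
  "instructions = {x. x 0 = (0,0) \<and> (\<forall>t. psub (x (Suc t)) (x t) \<in> dirs)}"

definition step_pmf :: "real \<Rightarrow> pt \<Rightarrow> pt pmf" where
  "step_pmf p d = bind_pmf (bernoulli_pmf p)
      (\<lambda>err. if err then pmf_of_set dirs else return_pmf d)"

primrec walk_path :: "real \<Rightarrow> (nat \<Rightarrow> pt) \<Rightarrow> nat \<Rightarrow> pt list pmf" where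
  "walk_path p x 0 = return_pmf [(0,0)]"
| "walk_path p x (Suc t) = bind_pmf (walk_path p x t)
      (\<lambda>ys. map_pmf (\<lambda>s. ys @ [padd (last ys) s]) (step_pmf p (psub (x (Suc t)) (x t))))"

definition visits :: "real \<Rightarrow> (nat \<Rightarrow> pt) \<Rightarrow> nat \<Rightarrow> real" where
  "visits p x \<tau> = measure_pmf.expectation (walk_path p x \<tau>)
      (\<lambda>ys. real (card {t. t \<le> \<tau> \<and> ys ! t = (0,0)}))"

text \<open>R_tau(p): minimum over all sequences of instructions (the infimum is attained).\<close>
definition R :: "nat \<Rightarrow> real \<Rightarrow> real" where
  "R \<tau> p = (INF x\<in>instructions. visits p x \<tau>)"

definition walk_end :: "pt list \<Rightarrow> pt" where
  "walk_end ws = foldr padd ws (0,0)"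

definition W :: "nat \<Rightarrow> pt \<Rightarrow> nat" where
  "W r ab = card {ws. length ws = r \<and> set ws \<subseteq> dirs \<and> walk_end ws = ab}"

definition Wrs :: "nat \<Rightarrow> nat \<Rightarrow> nat" where
  "Wrs r s = Min (W r ` {(a,b). \<bar>a\<bar> + \<bar>b\<bar> \<le> int s \<and> (a + b) mod 2 = int s mod 2})"

end

theory Submission
  imports Defs
begin

text \<open>
  Split the guided walk according to which steps are erroneous: given that r of the first t steps
  were errors and that the correctly executed instructions add up to S, the position X_t is S plus
  an independent r-step simple random walk, and r is Binomial(t, p). Hence
  P(X_t = 0) = E[W_r(-S) / 4^r]. As S is a sum of t - r unit steps, -S lies in the diamond
  |a| + |b| \<le> t - r, a + b \<equiv> t - r (mod 2), so W_r(-S) \<ge> W_{r,t-r}; summing over the even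
  times t \<le> \<tau> gives the lower bound for every sequence of instructions. For \<tau> = 4 the
  straight-line instructions attain it: there S = (t - r, 0), and at these points W_r already
  takes its minimum over the diamond.
\<close>

lemma padd_eq_plus: "padd = (+)"
  by (auto simp: fun_eq_iff padd_def plus_prod_def)

lemma psub_eq_minus: "psub = (-)"
  by (auto simp: fun_eq_iff psub_def minus_prod_def)

lemma finite_dirs: "finite dirs"
  and card_dirs: "card dirs = 4"
  and dirs_nonempty: "dirs \<noteq> {}"
  by (auto simp: dirs_def)

definition walks :: "nat \<Rightarrow> pt \<Rightarrow> pt list set" where
  "walks r z = {ws. length ws = r \<and> set ws \<subseteq> dirs \<and> walk_end ws = z}"

lemma W_eq_card_walks: "W r z = card (walks r z)"
  by (simp add: W_def walks_def)

lemma finite_walks: "finite (walks r z)"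
proof (rule finite_subset)
  show "walks r z \<subseteq> {ws. set ws \<subseteq> dirs \<and> length ws = r}"
    by (auto simp: walks_def)
qed (rule finite_lists_length_eq[OF finite_dirs])

lemma walk_end_Cons: "walk_end (e # ws) = e + walk_end ws"
  by (simp add: walk_end_def padd_eq_plus)

lemma walks_Suc: "walks (Suc r) z = (\<Union>e\<in>dirs. (#) e ` walks r (z - e))"
proof safe
  fix ws assume ws: "ws \<in> walks (Suc r) z"
  then obtain e ws' where "ws = e # ws'"
    by (cases ws) (auto simp: walks_def)
  with ws show "ws \<in> (\<Union>e\<in>dirs. (#) e ` walks r (z - e))"
    by (auto simp: walks_def walk_end_Cons algebra_simps)
qed (auto simp: walks_def walk_end_Cons)

lemma W_0: "W 0 z = (if z = 0 then 1 else 0)"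
proof -
  have "walks 0 z = (if z = 0 then {[]} else {})"
    by (auto simp: walks_def walk_end_def zero_prod_def)
  then show ?thesis
    by (simp add: W_eq_card_walks)
qed

lemma W_Suc: "W (Suc r) z = (\<Sum>e\<in>dirs. W r (z - e))"
  unfolding W_eq_card_walks walks_Suc
  by (subst card_UN_disjoint) (auto simp: finite_dirs finite_walks card_image)

lemma W_Suc_coords:
  "W (Suc r) (a, b) = W r (a - 1, b) + W r (a + 1, b) + W r (a, b - 1) + W r (a, b + 1)"
  by (simp add: W_Suc dirs_def)

definition diamond :: "nat \<Rightarrow> pt set" where
  "diamond s = {(a, b). \<bar>a\<bar> + \<bar>b\<bar> \<le> int s \<and> (a + b) mod 2 = int s mod 2}"

lemma finite_diamond: "finite (diamond s)"
proof (rule finite_subset)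
  show "diamond s \<subseteq> {-int s..int s} \<times> {-int s..int s}"
    by (auto simp: diamond_def abs_le_iff)
qed simp

lemma Wrs_eq_Min_diamond: "Wrs r s = Min (W r ` diamond s)"
  by (simp add: Wrs_def diamond_def)

lemma Wrs_le_W: "z \<in> diamond s \<Longrightarrow> Wrs r s \<le> W r z"
  by (simp add: Wrs_eq_Min_diamond finite_diamond)

lemma zero_in_diamond_0: "0 \<in> diamond 0"
  by (simp add: diamond_def zero_prod_def)

lemma uminus_in_diamond_iff: "- z \<in> diamond s \<longleftrightarrow> z \<in> diamond s"
proof -
  have "(- a - b) mod 2 = (a + b) mod 2" for a b :: int
    by presburger
  then show ?thesis
    by (cases z) (simp add: diamond_def add.commute)
qed

lemma add_dir_in_diamond:
  assumes "z \<in> diamond s" and "e \<in> dirs"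
  shows "z + e \<in> diamond (Suc s)"
proof -
  obtain a b where z: "z = (a, b)" and ab: "\<bar>a\<bar> + \<bar>b\<bar> \<le> int s" "(a + b) mod 2 = int s mod 2"
    using assms(1) by (auto simp: diamond_def)
  obtain c d where e: "e = (c, d)" and cd: "\<bar>c\<bar> + \<bar>d\<bar> = 1" "(c + d) mod 2 = 1"
    using assms(2) by (auto simp: dirs_def)
  have "\<bar>a + c\<bar> + \<bar>b + d\<bar> \<le> int (Suc s)"
    using ab(1) cd(1) by linarith
  moreover have "(a + c + (b + d)) mod 2 = int (Suc s) mod 2"
    using ab(2) cd(2) by presburger
  ultimately show ?thesis
    by (simp add: z e diamond_def)
qed

lemma W_eq_0_if_notin_diamond: "z \<notin> diamond r \<Longrightarrow> W r z = 0"
proof (induction r arbitrary: z)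
  case 0
  then show ?case
    using zero_in_diamond_0 by (auto simp: W_0)
next
  case (Suc r)
  have "z - e \<notin> diamond r" if "e \<in> dirs" for e
    using add_dir_in_diamond[of "z - e" r e] that Suc.prems by auto
  then show ?case
    by (simp add: W_Suc Suc.IH)
qed

lemma Wrs_eq_0: "r < s \<Longrightarrow> Wrs r s = 0"
proof -
  assume "r < s"
  then have "(int s, 0) \<notin> diamond r"
    by (simp add: diamond_def)
  moreover have "(int s, 0) \<in> diamond s"
    by (simp add: diamond_def)
  ultimately show "Wrs r s = 0"
    using Wrs_le_W[of "(int s, 0)" s r] W_eq_0_if_notin_diamond by simp
qed

primrec srw_pmf :: "nat \<Rightarrow> pt pmf" where
  "srw_pmf 0 = return_pmf 0"
| "srw_pmf (Suc r) = bind_pmf (pmf_of_set dirs) (\<lambda>e. map_pmf ((+) e) (srw_pmf r))"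

lemma pmf_map_pmf_translate: "pmf (map_pmf ((+) (e::'a::group_add)) M) z = pmf M (- e + z)"
proof -
  have "pmf (map_pmf ((+) e) M) (e + (- e + z)) = pmf M (- e + z)"
    by (rule pmf_map_inj') (auto simp: inj_def)
  then show ?thesis
    by (simp add: add.assoc[symmetric])
qed

lemma pmf_srw_pmf: "pmf (srw_pmf r) z = real (W r z) / 4 ^ r"
proof (induction r arbitrary: z)
  case 0
  then show ?case
    by (simp add: W_0 indicator_def)
next
  case (Suc r)
  have "pmf (srw_pmf (Suc r)) z = (\<Sum>e\<in>dirs. pmf (srw_pmf r) (z - e)) / 4"
    by (simp add: pmf_bind_pmf_of_set finite_dirs dirs_nonempty card_dirs pmf_map_pmf_translate
        algebra_simps)
  also have "\<dots> = real (W (Suc r) z) / 4 ^ Suc r"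
    by (simp add: Suc W_Suc sum_divide_distrib mult.commute)
  finally show ?case .
qed

lemma srw_pmf_Suc': "srw_pmf (Suc r) = bind_pmf (srw_pmf r) (\<lambda>w. map_pmf ((+) w) (pmf_of_set dirs))"
proof -
  have "srw_pmf (Suc r) =
      bind_pmf (pmf_of_set dirs) (\<lambda>e. bind_pmf (srw_pmf r) (\<lambda>w. return_pmf (w + e)))"
    by (simp add: map_pmf_def add.commute)
  also have "\<dots> = bind_pmf (srw_pmf r) (\<lambda>w. map_pmf ((+) w) (pmf_of_set dirs))"
    by (subst bind_commute_pmf) (simp add: map_pmf_def)
  finally show ?thesis .
qed

primrec position_pmf :: "real \<Rightarrow> (nat \<Rightarrow> pt) \<Rightarrow> nat \<Rightarrow> pt pmf" where
  "position_pmf p x 0 = return_pmf 0"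
| "position_pmf p x (Suc t) =
     bind_pmf (position_pmf p x t) (\<lambda>z. map_pmf ((+) z) (step_pmf p (x (Suc t) - x t)))"

lemma length_walk_path: "ys \<in> set_pmf (walk_path p x t) \<Longrightarrow> length ys = Suc t"
  by (induction t arbitrary: ys) auto

lemma map_nth_walk_path:
  "t \<le> n \<Longrightarrow> map_pmf (\<lambda>ys. ys ! t) (walk_path p x n) = position_pmf p x t"
proof (induction n arbitrary: t)
  case 0
  then show ?case
    by (simp add: zero_prod_def)
next
  case (Suc n)
  let ?step = "step_pmf p (x (Suc n) - x n)"
  have "map_pmf (\<lambda>ys. ys ! t) (walk_path p x (Suc n)) =
        bind_pmf (walk_path p x n)
          (\<lambda>ys. map_pmf (\<lambda>s. if t \<le> n then ys ! t else ys ! n + s) ?step)"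
  proof (simp add: map_bind_pmf pmf.map_comp o_def psub_eq_minus,
      intro bind_pmf_cong pmf.map_cong refl)
    fix ys s assume "ys \<in> set_pmf (walk_path p x n)"
    then have len: "length ys = Suc n"
      by (rule length_walk_path)
    then have "ys \<noteq> []"
      by auto
    with Suc.prems len show "(ys @ [padd (last ys) s]) ! t = (if t \<le> n then ys ! t else ys ! n + s)"
      by (auto simp: nth_append last_conv_nth padd_eq_plus)
  qed
  also have "\<dots> = position_pmf p x t"
  proof (cases "t \<le> n")
    case True
    then show ?thesis
      by (simp add: Suc.IH[symmetric] map_pmf_def)
  next
    case False
    with Suc.prems have "t = Suc n"
      by simp
    then show ?thesis
      by (simp add: Suc.IH[symmetric] bind_map_pmf)
  qed
  finally show ?case .
qed

lemma visits_eq_sum_pmf_position: "visits p x \<tau> = (\<Sum>t\<le>\<tau>. pmf (position_pmf p x t) 0)"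
proof -
  have count_eq: "real (card {t. t \<le> \<tau> \<and> ys ! t = (0,0)}) = (\<Sum>t\<le>\<tau>. indicator {0} (ys ! t))"
    for ys :: "pt list"
    by (simp add: indicator_def sum.If_cases Collect_conj_eq Int_commute atMost_def zero_prod_def)
  have "visits p x \<tau> =
      (\<Sum>t\<le>\<tau>. measure_pmf.expectation (walk_path p x \<tau>) (\<lambda>ys. indicator {0} (ys ! t)))"
    unfolding visits_def count_eq
    by (rule Bochner_Integration.integral_sum)
      (auto intro: measure_pmf.integrable_const_bound[where B = 1])
  also have "\<dots> = (\<Sum>t\<le>\<tau>. pmf (position_pmf p x t) 0)"
  proof (intro sum.cong refl)
    fix t assume "t \<in> {..\<tau>}"
    have "measure_pmf.expectation (walk_path p x \<tau>) (\<lambda>ys. indicator {0} (ys ! t)) =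
        measure_pmf.expectation (map_pmf (\<lambda>ys. ys ! t) (walk_path p x \<tau>))
          (indicator {0} :: pt \<Rightarrow> real)"
      by (subst integral_map_pmf) (rule refl)
    also have "\<dots> = pmf (position_pmf p x t) 0"
      using \<open>t \<in> {..\<tau>}\<close> by (simp add: map_nth_walk_path measure_pmf_single)
    finally show "measure_pmf.expectation (walk_path p x \<tau>) (\<lambda>ys. indicator {0} (ys ! t)) =
        pmf (position_pmf p x t) 0" .
  qed
  finally show ?thesis .
qed

primrec errors_drift_pmf :: "real \<Rightarrow> (nat \<Rightarrow> pt) \<Rightarrow> nat \<Rightarrow> (nat \<times> pt) pmf" where
  "errors_drift_pmf p x 0 = return_pmf (0, 0)"
| "errors_drift_pmf p x (Suc t) = bind_pmf (errors_drift_pmf p x t)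
     (\<lambda>(r, S). map_pmf (\<lambda>err. if err then (Suc r, S) else (r, S + (x (Suc t) - x t)))
       (bernoulli_pmf p))"

lemma bind_srw_pmf_step_pmf:
  "bind_pmf (srw_pmf r) (\<lambda>w. map_pmf ((+) (S + w)) (step_pmf p d)) =
   bind_pmf (bernoulli_pmf p)
     (\<lambda>err. if err then map_pmf ((+) S) (srw_pmf (Suc r)) else map_pmf ((+) (S + d)) (srw_pmf r))"
proof -
  have "bind_pmf (srw_pmf r) (\<lambda>w. map_pmf ((+) (S + w)) (step_pmf p d)) =
      bind_pmf (bernoulli_pmf p) (\<lambda>err. bind_pmf (srw_pmf r)
        (\<lambda>w. map_pmf ((+) (S + w)) (if err then pmf_of_set dirs else return_pmf d)))"
    by (simp add: step_pmf_def map_bind_pmf bind_commute_pmf[of "srw_pmf r"])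
  also have "\<dots> = bind_pmf (bernoulli_pmf p)
     (\<lambda>err. if err then map_pmf ((+) S) (srw_pmf (Suc r)) else map_pmf ((+) (S + d)) (srw_pmf r))"
  proof (intro bind_pmf_cong refl)
    have "bind_pmf (srw_pmf r) (\<lambda>w. map_pmf ((+) (S + w)) (pmf_of_set dirs)) =
        map_pmf ((+) S) (srw_pmf (Suc r))"
      by (simp add: srw_pmf_Suc' map_bind_pmf pmf.map_comp o_def del: srw_pmf.simps)
        (simp add: add.assoc[symmetric])
    moreover have "bind_pmf (srw_pmf r) (\<lambda>w. map_pmf ((+) (S + w)) (return_pmf d)) =
        map_pmf ((+) (S + d)) (srw_pmf r)"
      by (simp add: map_pmf_def bind_return_pmf add_ac)
    ultimately show "bind_pmf (srw_pmf r)
        (\<lambda>w. map_pmf ((+) (S + w)) (if err then pmf_of_set dirs else return_pmf d)) =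
      (if err then map_pmf ((+) S) (srw_pmf (Suc r)) else map_pmf ((+) (S + d)) (srw_pmf r))"
      for err
      by simp
  qed
  finally show ?thesis .
qed

lemma position_pmf_eq_bind_errors_drift_pmf:
  "position_pmf p x t = bind_pmf (errors_drift_pmf p x t) (\<lambda>(r, S). map_pmf ((+) S) (srw_pmf r))"
proof (induction t)
  case 0
  then show ?case
    by (simp add: bind_return_pmf)
next
  case (Suc t)
  let ?d = "x (Suc t) - x t"
  have "position_pmf p x (Suc t) = bind_pmf (errors_drift_pmf p x t)
      (\<lambda>(r, S). bind_pmf (srw_pmf r) (\<lambda>w. map_pmf ((+) (S + w)) (step_pmf p ?d)))"
    by (simp add: Suc bind_assoc_pmf bind_map_pmf case_prod_beta')
  also have "\<dots> = bind_pmf (errors_drift_pmf p x t) (\<lambda>(r, S). bind_pmf (bernoulli_pmf p)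
      (\<lambda>err. if err then map_pmf ((+) S) (srw_pmf (Suc r))
        else map_pmf ((+) (S + ?d)) (srw_pmf r)))"
    by (simp only: bind_srw_pmf_step_pmf)
  also have "\<dots> = bind_pmf (errors_drift_pmf p x (Suc t)) (\<lambda>(r, S). map_pmf ((+) S) (srw_pmf r))"
    by (simp add: bind_assoc_pmf bind_map_pmf case_prod_beta' if_distrib
        del: srw_pmf.simps cong: if_cong)
  finally show ?case .
qed

lemma map_fst_errors_drift_pmf:
  assumes "p \<in> {0..1}"
  shows "map_pmf fst (errors_drift_pmf p x t) = binomial_pmf t p"
proof (induction t)
  case 0
  then show ?case
    using assms by (simp add: binomial_pmf_0)
next
  case (Suc t)
  have "map_pmf fst (errors_drift_pmf p x (Suc t)) =
      bind_pmf (map_pmf fst (errors_drift_pmf p x t))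
        (\<lambda>r. map_pmf (\<lambda>err. if err then Suc r else r) (bernoulli_pmf p))"
    by (simp add: map_bind_pmf bind_map_pmf pmf.map_comp o_def case_prod_beta' if_distrib
        cong: if_cong)
  also have "\<dots> = bind_pmf (binomial_pmf t p)
      (\<lambda>r. bind_pmf (bernoulli_pmf p) (\<lambda>err. return_pmf ((if err then 1 else 0) + r)))"
    unfolding Suc by (auto simp: map_pmf_def intro!: bind_pmf_cong)
  also have "\<dots> = binomial_pmf (Suc t) p"
    by (subst bind_commute_pmf) (rule binomial_pmf_Suc[OF assms, symmetric])
  finally show ?case .
qed

lemma finite_set_pmf_errors_drift_pmf: "finite (set_pmf (errors_drift_pmf p x t))"
  by (induction t) (auto simp: split_beta)

lemma expectation_errors_drift_pmf_fst:
  assumes "p \<in> {0..1}"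
  shows "measure_pmf.expectation (errors_drift_pmf p x t) (\<lambda>(r, S). g r :: real) =
    (\<Sum>r\<le>t. g r * pmf (binomial_pmf t p) r)"
proof -
  have "measure_pmf.expectation (errors_drift_pmf p x t) (\<lambda>(r, S). g r) =
      measure_pmf.expectation (map_pmf fst (errors_drift_pmf p x t)) g"
    by (simp add: case_prod_beta')
  also have "\<dots> = (\<Sum>r\<le>t. g r * pmf (binomial_pmf t p) r)"
    by (subst map_fst_errors_drift_pmf[OF assms], intro integral_measure_pmf_real)
      (use assms in \<open>auto simp: set_pmf_binomial_eq split: if_splits\<close>)
  finally show ?thesis .
qed

lemma pmf_position_pmf_origin:
  "pmf (position_pmf p x t) 0 =
    measure_pmf.expectation (errors_drift_pmf p x t) (\<lambda>(r, S). real (W r (- S)) / 4 ^ r)"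
  by (simp add: position_pmf_eq_bind_errors_drift_pmf pmf_bind case_prod_beta' pmf_map_pmf_translate
      pmf_srw_pmf)

lemma errors_drift_pmf_in_diamond:
  assumes "x \<in> instructions" and "(r, S) \<in> set_pmf (errors_drift_pmf p x t)"
  shows "r \<le> t \<and> S \<in> diamond (t - r)"
  using assms(2)
proof (induction t arbitrary: r S)
  case 0
  then show ?case
    by (simp add: zero_in_diamond_0)
next
  case (Suc t)
  from Suc.prems obtain r' S' err where prev: "(r', S') \<in> set_pmf (errors_drift_pmf p x t)"
    and rS: "(r, S) = (if err then (Suc r', S') else (r', S' + (x (Suc t) - x t)))"
    by auto
  have "x (Suc t) - x t \<in> dirs"
    using assms(1) by (simp add: instructions_def psub_eq_minus)
  with Suc.IH[OF prev] rS show ?case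
    by (cases err) (auto simp: Suc_diff_le intro: add_dir_in_diamond)
qed

lemma pmf_position_pmf_origin_ge:
  assumes "x \<in> instructions" and "p \<in> {0..1}"
  shows "(\<Sum>r\<le>t. real (Wrs r (t - r)) / 4 ^ r * pmf (binomial_pmf t p) r) \<le>
    pmf (position_pmf p x t) 0"
proof -
  have "(\<Sum>r\<le>t. real (Wrs r (t - r)) / 4 ^ r * pmf (binomial_pmf t p) r) =
      measure_pmf.expectation (errors_drift_pmf p x t) (\<lambda>(r, S). real (Wrs r (t - r)) / 4 ^ r)"
    by (rule expectation_errors_drift_pmf_fst[OF assms(2), symmetric])
  also have "\<dots> \<le>
      measure_pmf.expectation (errors_drift_pmf p x t) (\<lambda>(r, S). real (W r (- S)) / 4 ^ r)"
  proof (intro integral_mono_AE integrable_measure_pmf_finite finite_set_pmf_errors_drift_pmf)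
    show "AE rS in measure_pmf (errors_drift_pmf p x t).
        (\<lambda>(r, S). real (Wrs r (t - r)) / 4 ^ r) rS \<le> (\<lambda>(r, S). real (W r (- S)) / 4 ^ r) rS"
    proof (unfold AE_measure_pmf_iff, intro ballI)
      fix rS assume rS: "rS \<in> set_pmf (errors_drift_pmf p x t)"
      obtain r S where rS_eq: "rS = (r, S)"
        by (cases rS)
      from rS have "- S \<in> diamond (t - r)"
        using errors_drift_pmf_in_diamond[OF assms(1)] uminus_in_diamond_iff by (auto simp: rS_eq)
      then show "(\<lambda>(r, S). real (Wrs r (t - r)) / 4 ^ r) rS \<le>
          (\<lambda>(r, S). real (W r (- S)) / 4 ^ r) rS"
        by (simp add: rS_eq Wrs_le_W divide_right_mono)
    qed
  qed
  also have "\<dots> = pmf (position_pmf p x t) 0"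
    by (rule pmf_position_pmf_origin[symmetric])
  finally show ?thesis .
qed

definition visit_lower_bound :: "nat \<Rightarrow> real \<Rightarrow> real" where
  "visit_lower_bound \<tau> p = (\<Sum>k=0..\<tau> div 2. \<Sum>r=0..2*k.
     real ((2*k) choose r) * (1-p)^(2*k-r) * (p/4)^r * real (Wrs r (2*k-r)))"

lemma visits_ge_visit_lower_bound:
  assumes "x \<in> instructions" and "p \<in> {0..1}"
  shows "visit_lower_bound \<tau> p \<le> visits p x \<tau>"
proof -
  have "visit_lower_bound \<tau> p = (\<Sum>k=0..\<tau> div 2.
      \<Sum>r\<le>2*k. real (Wrs r (2*k - r)) / 4 ^ r * pmf (binomial_pmf (2*k) p) r)"
    using assms(2) unfolding visit_lower_bound_def atLeast0AtMost
    by (intro sum.cong refl) (simp add: pmf_binomial power_divide field_simps)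
  also have "\<dots> \<le> (\<Sum>k=0..\<tau> div 2. pmf (position_pmf p x (2*k)) 0)"
    by (intro sum_mono pmf_position_pmf_origin_ge assms)
  also have "\<dots> = (\<Sum>t\<in>(*) 2 ` {0..\<tau> div 2}. pmf (position_pmf p x t) 0)"
    by (subst sum.reindex) (auto simp: inj_on_def)
  also have "\<dots> \<le> (\<Sum>t\<le>\<tau>. pmf (position_pmf p x t) 0)"
    by (intro sum_mono2) auto
  also have "\<dots> = visits p x \<tau>"
    by (simp add: visits_eq_sum_pmf_position)
  finally show ?thesis .
qed

definition straight :: "nat \<Rightarrow> pt" where
  "straight t = (int t, 0)"

lemma straight_in_instructions: "straight \<in> instructions"
  by (simp add: instructions_def straight_def psub_def dirs_def)

lemma R_le_visits: "x \<in> instructions \<Longrightarrow> R \<tau> p \<le> visits p x \<tau>"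
  unfolding R_def
  by (rule cINF_lower)
    (auto intro!: bdd_belowI[where m = 0] sum_nonneg simp: visits_eq_sum_pmf_position)

lemma R_ge_visit_lower_bound: "p \<in> {0..1} \<Longrightarrow> visit_lower_bound \<tau> p \<le> R \<tau> p"
  unfolding R_def
  by (rule cINF_greatest) (use straight_in_instructions visits_ge_visit_lower_bound in auto)

lemma errors_drift_pmf_straight:
  "(r, S) \<in> set_pmf (errors_drift_pmf p straight t) \<Longrightarrow> r \<le> t \<and> S = (int (t - r), 0)"
proof (induction t arbitrary: r S)
  case 0
  then show ?case
    by (simp add: zero_prod_def)
next
  case (Suc t)
  then obtain r' S' err where prev: "(r', S') \<in> set_pmf (errors_drift_pmf p straight t)"
    and rS: "(r, S) = (if err then (Suc r', S') else (r', S' + (straight (Suc t) - straight t)))"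
    by auto
  with Suc.IH[OF prev] show ?case
    by (cases err) (auto simp: straight_def of_nat_diff)
qed

lemma pmf_position_pmf_straight_origin:
  assumes "p \<in> {0..1}"
  shows "pmf (position_pmf p straight t) 0 =
    (\<Sum>r\<le>t. real (W r (- int (t - r), 0)) / 4 ^ r * pmf (binomial_pmf t p) r)"
proof -
  have "pmf (position_pmf p straight t) 0 =
      measure_pmf.expectation (errors_drift_pmf p straight t) (\<lambda>(r, S). real (W r (- S)) / 4 ^ r)"
    by (rule pmf_position_pmf_origin)
  also have "\<dots> = measure_pmf.expectation (errors_drift_pmf p straight t)
      (\<lambda>(r, S). real (W r (- int (t - r), 0)) / 4 ^ r)"
    by (intro integral_cong_AE)
      (auto simp: AE_measure_pmf_iff dest!: errors_drift_pmf_straight)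
  also have "\<dots> = (\<Sum>r\<le>t. real (W r (- int (t - r), 0)) / 4 ^ r * pmf (binomial_pmf t p) r)"
    by (rule expectation_errors_drift_pmf_fst[OF assms])
  finally show ?thesis .
qed

lemma visits_straight_4:
  assumes "p \<in> {0..1}"
  shows "visits p straight 4 =
    1 + 1/4*p^2 + 1/2*p*(1-p) + 9/64*p^4 + 9/16*p^3*(1-p) + 3/8*p^2*(1-p)^2"
proof -
  have "visits p straight 4 = (\<Sum>t\<le>4. \<Sum>r\<le>t.
      real (W r (- int (t - r), 0)) / 4 ^ r * (real (t choose r) * p ^ r * (1 - p) ^ (t - r)))"
    using assms
    by (simp add: visits_eq_sum_pmf_position pmf_position_pmf_straight_origin pmf_binomial)
  also have "\<dots> = 1 + 1/4*p^2 + 1/2*p*(1-p) + 9/64*p^4 + 9/16*p^3*(1-p) + 3/8*p^2*(1-p)^2"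
    by (simp add: eval_nat_numeral W_Suc_coords W_0 zero_prod_def)
  finally show ?thesis .
qed

lemma diamond_0: "diamond 0 = {0}"
  by (auto simp: diamond_def zero_prod_def)

lemma diamond_1: "diamond 1 = dirs"
proof (rule equalityI)
  show "diamond 1 \<subseteq> dirs"
  proof
    fix z assume "z \<in> diamond 1"
    then obtain a b where z: "z = (a, b)" and "\<bar>a\<bar> + \<bar>b\<bar> \<le> 1" "(a + b) mod 2 = 1"
      by (cases z) (auto simp: diamond_def)
    then have "a = 0 \<and> (b = 1 \<or> b = -1) \<or> b = 0 \<and> (a = 1 \<or> a = -1)"
      by presburger
    then show "z \<in> dirs"
      by (auto simp: z dirs_def)
  qed
  show "dirs \<subseteq> diamond 1"
    by (simp add: dirs_def diamond_def)
qed

lemma diamond_2: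
  "diamond 2 = {(0, 0), (2, 0), (-2, 0), (0, 2), (0, -2), (1, 1), (1, -1), (-1, 1), (-1, -1)}"
  (is "_ = ?D")
proof (rule equalityI)
  have small: "a = -2 \<or> a = -1 \<or> a = 0 \<or> a = 1 \<or> a = 2" if "\<bar>a\<bar> \<le> (2::int)" for a
    using that by arith
  show "diamond 2 \<subseteq> ?D"
  proof
    fix z assume z: "z \<in> diamond 2"
    obtain a b where ab: "z = (a, b)" "(a, b) \<in> diamond 2"
      using z by (cases z) simp
    then have "\<bar>a\<bar> \<le> 2" "\<bar>b\<bar> \<le> 2"
      by (auto simp: diamond_def)
    with small[OF this(1)] small[OF this(2)] ab show "z \<in> ?D"
      by (elim disjE) (simp_all add: diamond_def)
  qed
  show "?D \<subseteq> diamond 2"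
    by (simp add: diamond_def)
qed

lemma Wrs_small:
  "Wrs 0 0 = 1" "Wrs 2 0 = 4" "Wrs 4 0 = 36" "Wrs 1 1 = 1" "Wrs 3 1 = 9" "Wrs 2 2 = 1"
  unfolding Wrs_eq_Min_diamond diamond_0 diamond_1 diamond_2 dirs_def
  by (simp_all add: W_Suc_coords W_0 zero_prod_def eval_nat_numeral)

lemma visit_lower_bound_4:
  "visit_lower_bound 4 p = 1 + 1/4*p^2 + 1/2*p*(1-p) + 9/64*p^4 + 9/16*p^3*(1-p) + 3/8*p^2*(1-p)^2"
proof -
  have "visit_lower_bound 4 p = Wrs 0 0
      + ((1-p)^2 * Wrs 0 2 + 2 * (1-p) * (p/4) * Wrs 1 1 + (p/4)^2 * Wrs 2 0)
      + ((1-p)^4 * Wrs 0 4 + 4 * (1-p)^3 * (p/4) * Wrs 1 3 + 6 * (1-p)^2 * (p/4)^2 * Wrs 2 2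
         + 4 * (1-p) * (p/4)^3 * Wrs 3 1 + (p/4)^4 * Wrs 4 0)"
    by (simp add: visit_lower_bound_def atLeast0AtMost) (simp add: eval_nat_numeral)
  also have "\<dots> = 1 + 1/4*p^2 + 1/2*p*(1-p) + 9/64*p^4 + 9/16*p^3*(1-p) + 3/8*p^2*(1-p)^2"
    using Wrs_small Wrs_eq_0[of 0 2] Wrs_eq_0[of 0 4] Wrs_eq_0[of 1 3] by (simp add: field_simps)
  finally show ?thesis .
qed

theorem proposition3:
  fixes \<tau> :: nat and p :: real
  assumes "\<tau> > 0" and "even \<tau>" and "0 \<le> p" and "p \<le> 1"
  shows "(R \<tau> p \<ge> (\<Sum>k=0..\<tau> div 2. \<Sum>r=0..2*k.
            real ((2*k) choose r) * (1-p)^(2*k-r) * (p/4)^r * real (Wrs r (2*k-r)))) \<and>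
         R 4 p = 1 + 1/4*p^2 + 1/2*p*(1-p) + 9/64*p^4 + 9/16*p^3*(1-p) + 3/8*p^2*(1-p)^2"
proof
  \<comment> \<open>The lower bound holds for every \<tau>.\<close>
  have p: "p \<in> {0..1}"
    using assms(3,4) by simp
  show "R \<tau> p \<ge> (\<Sum>k=0..\<tau> div 2. \<Sum>r=0..2*k.
      real ((2*k) choose r) * (1-p)^(2*k-r) * (p/4)^r * real (Wrs r (2*k-r)))"
    using R_ge_visit_lower_bound[OF p] by (simp add: visit_lower_bound_def)
  have "R 4 p \<le> visits p straight 4"
    by (rule R_le_visits[OF straight_in_instructions])
  moreover have "visit_lower_bound 4 p \<le> R 4 p"
    by (rule R_ge_visit_lower_bound[OF p])
  ultimately show "R 4 p = 1 + 1/4*p^2 + 1/2*p*(1-p) + 9/64*p^4 + 9/16*p^3*(1-p) + 3/8*p^2*(1-p)^2"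
    using visits_straight_4[OF p] visit_lower_bound_4[of p] by linarith
qed

end
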